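(* Let $s\ge 1$, let $\boldsymbol\xi=(\xi_1,\dots,\xi_\ell)$ consist of representatives of pairwise distinct nontrivial conjugacy classes of $\mathbb{F}_{q^m}$, let $\mathbf n=(n_1,\dots,n_\ell)$ be a length partition of $n$, and let $\boldsymbol\beta_1,\dots,\boldsymbol\beta_s\in\mathbb{F}_{q^m}^n$ be such that every block $\boldsymbol\beta_j^{(i)}\in\mathbb{F}_{q^m}^{n_i}$ has $\mathbb{F}_q$-linearly independent entries. Let $\mathbf c=(\mathbf c_1\mid\dots\mid\mathbf c_s)$ be a codeword of the HILRS code with these parameters and dimension $sk$, with message-polynomial vector $(f_1,\dots,f_s)$, i.e. $f_j\in\mathbb{F}_{q^m}[x;\theta,\delta]_{<k}$ and $\mathbf c_j=f_j(\boldsymbol\beta_j)_{\boldsymbol\xi}$ for all $j$. Let $\mathbf y=\mathbf c+\mathbf e\in\mathbb{F}_{q^m}^{sn}$, where $\mathbf e=(\mathbf e_1\mid\dots\mid\mathbf e_s)$ has sum-rank weight $t$ (with respect to the block-ordered partition), and let $\sigma\in\mathbb{F}_{q^m}[x;\theta,\delta]$ be the error-span polynomial of $\mathbf e$. For $j=1,\dots,s$ let $G_j$ be the minimal skew polynomial of $\boldsymbol\beta_j$ with respect to $\boldsymbol\xi$, and let $R_j$ be the interpolation polynomial with $\deg R_j<n$ and $R_j(\boldsymbol\beta_j)_{\boldsymbol\xi}=\mathbf y_j$. Then $$\sigma\cdot R_j\equiv \sigma\cdot f_j \bmod_r G_j\qquad\text{for all } j=1,\dots,s.$$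
   Context: Let $q$ be a prime power, $m\ge 1$, and $\theta$ an automorphism of $\mathbb{F}_{q^m}$ with fixed field $\mathbb{F}_q$. Let $\delta:\mathbb{F}_{q^m}\to\mathbb{F}_{q^m}$ be a $\theta$-derivation, i.e. $\delta(a+b)=\delta(a)+\delta(b)$ and $\delta(ab)=\delta(a)b+\theta(a)\delta(b)$. Elements $a,b\in\mathbb{F}_{q^m}$ are conjugate if $b=\theta(c)ac^{-1}+\delta(c)c^{-1}$ for some $c\ne0$; the conjugacy class of $0$ is called trivial. The skew polynomial ring $\mathbb{F}_{q^m}[x;\theta,\delta]$ consists of polynomials $\sum_i f_ix^{i-1}$ ($f_i\in\mathbb{F}_{q^m}$, finitely many nonzero) with ordinary addition and multiplication determined by $xa=\theta(a)x+\delta(a)$; $\mathbb{F}_{q^m}[x;\theta,\delta]_{<k}$ is the set of those of degree $<k$. For $g\neq 0$, $f\bmod_r g$ denotes the unique $r$ with $\deg r<\deg g$ and $f=Qg+r$ for some $Q$ (right division), and $f\equiv h\bmod_r g$ means $f\bmod_r g=h\bmod_r g$. For $a,b\in\mathbb{F}_{q^m}$ set $\mathcal D_a(b):=\theta(b)a+\delta(b)$, $\mathcal D_a^0(b)=b$, $\mathcal D_a^i(b)=\mathcal D_a(\mathcal D_a^{i-1}(b))$. The generalized operator evaluation of $f=\sum_{i=1}^d f_ix^{i-1}$ at $b$ with respect to $a$ is $f(b)_a:=\sum_{i=1}^d f_i\mathcal D_a^{i-1}(b)$. A length partition of $n$ is $\mathbf n=(n_1,\dots,n_\ell)$ of positive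 integers with sum $n$; a vector $\mathbf x\in\mathbb{F}_{q^m}^n$ is written in blocks $\mathbf x=(\mathbf x^{(1)}\mid\dots\mid\mathbf x^{(\ell)})$, $\mathbf x^{(i)}\in\mathbb{F}_{q^m}^{n_i}$, and for $\mathbf a=(a_1,\dots,a_\ell)$ one writes $f(\mathbf x)_{\mathbf a}:=(f(\mathbf x^{(1)})_{a_1}\mid\dots\mid f(\mathbf x^{(\ell)})_{a_\ell})$ (entrywise evaluation in each block). The LRS code $\mathrm{LRS}[\boldsymbol\beta,\boldsymbol\xi;\mathbf n,k]$ is $\{f(\boldsymbol\beta)_{\boldsymbol\xi}: f\in\mathbb{F}_{q^m}[x;\theta,\delta]_{<k}\}$; the HILRS code of interleaving order $s$ with code locators $(\boldsymbol\beta_1\mid\dots\mid\boldsymbol\beta_s)$ and dimension $sk$ is $\{(\mathbf c_1\mid\dots\mid\mathbf c_s)\in\mathbb{F}_{q^m}^{sn}:\mathbf c_j\in\mathrm{LRS}[\boldsymbol\beta_j,\boldsymbol\xi;\mathbf n,k]\ \forall j\}$. For $\mathbf x=(\mathbf x_1\mid\dots\mid\mathbf x_s)\in\mathbb{F}_{q^m}^{sn}$ with each $\mathbf x_j$ split in blocks according to $\mathbf n$, its sum-rank weight (block-ordered partition) is $\mathrm{wt}_{\Sigma R}(\mathbf x)=\sum_{i=1}^\ell\mathrm{rk}_q(\mathbf x_1^{(i)}\mid\dots\mid\mathbf x_s^{(i)})$, where $\mathrm{rk}_q$ is the maximal number of $\mathbb{F}_q$-linearly independent entries. Error decomposition: if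 $t_i=\mathrm{rk}_q(\mathbf e_1^{(i)}\mid\dots\mid\mathbf e_s^{(i)})$, there are $\mathbf a^{(i)}\in\mathbb{F}_{q^m}^{t_i}$ with $\mathbb{F}_q$-linearly independent entries and $\mathbf B_j^{(i)}\in\mathbb{F}_q^{t_i\times n_i}$ with $\mathrm{rk}(\mathbf B_1^{(i)}\mid\dots\mid\mathbf B_s^{(i)})=t_i$ and $\mathbf e_j^{(i)}=\mathbf a^{(i)}\mathbf B_j^{(i)}$ for all $i,j$; the entries of $\mathbf a^{(i)}$ are the error values. The error-span polynomial $\sigma$ is the monic nonzero skew polynomial of least degree with $\sigma(\mathbf a^{(i)})_{\xi_i}=\mathbf 0$ for all $i=1,\dots,\ell$. The minimal skew polynomial of $\boldsymbol\beta_j$ with respect to $\boldsymbol\xi$ is the monic nonzero skew polynomial $G_j$ of least degree with $G_j(\boldsymbol\beta_j^{(i)})_{\xi_i}=\mathbf 0$ for all $i$. *)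

theory Defs
  imports "HOL-Computational_Algebra.Polynomial"
begin

text \<open>The field F_{q^m} is a finite field type 'a; theta is a field automorphism of it and
  F_q is by definition its fixed field.\<close>

definition is_field_aut :: "('a::field \<Rightarrow> 'a) \<Rightarrow> bool" where
  "is_field_aut \<theta> \<longleftrightarrow> bij \<theta> \<and> (\<forall>a b. \<theta> (a + b) = \<theta> a + \<theta> b) \<and>
     (\<forall>a b. \<theta> (a * b) = \<theta> a * \<theta> b) \<and> \<theta> 1 = 1"

definition fixed_field :: "('a \<Rightarrow> 'a) \<Rightarrow> 'a set" where
  "fixed_field \<theta> = {a. \<theta> a = a}"

definition is_theta_derivation :: "('a::field \<Rightarrow> 'a) \<Rightarrow> ('a \<Rightarrow> 'a) \<Rightarrow> bool" where
  "is_theta_derivation \<theta> \<delta> \<longleftrightarrow> (\<forall>a b. \<delta> (a + b) = \<delta> a + \<delta> b) \<and>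
     (\<forall>a b. \<delta> (a * b) = \<delta> a * b + \<theta> a * \<delta> b)"

definition skew_conj :: "('a::field \<Rightarrow> 'a) \<Rightarrow> ('a \<Rightarrow> 'a) \<Rightarrow> 'a \<Rightarrow> 'a \<Rightarrow> bool" where
  "skew_conj \<theta> \<delta> a b \<longleftrightarrow> (\<exists>c. c \<noteq> 0 \<and> b = \<theta> c * a * inverse c + \<delta> c * inverse c)"

text \<open>A skew polynomial is represented by its coefficient sequence, stored in the library
  type 'a poly (used only as a container for coefficients: addition, degree, coefficients).
  The skew product is defined separately via the rule x a = theta(a) x + delta(a).\<close>

definition skew_lmul_x :: "('a::field \<Rightarrow> 'a) \<Rightarrow> ('a \<Rightarrow> 'a) \<Rightarrow> 'a poly \<Rightarrow> 'a poly" where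
  "skew_lmul_x \<theta> \<delta> p = pCons 0 (map_poly \<theta> p) + map_poly \<delta> p"

definition skew_mult :: "('a::field \<Rightarrow> 'a) \<Rightarrow> ('a \<Rightarrow> 'a) \<Rightarrow> 'a poly \<Rightarrow> 'a poly \<Rightarrow> 'a poly" where
  "skew_mult \<theta> \<delta> p q = (\<Sum>i\<le>degree p. smult (coeff p i) ((skew_lmul_x \<theta> \<delta> ^^ i) q))"

definition skew_rmod :: "('a::field \<Rightarrow> 'a) \<Rightarrow> ('a \<Rightarrow> 'a) \<Rightarrow> 'a poly \<Rightarrow> 'a poly \<Rightarrow> 'a poly" where
  "skew_rmod \<theta> \<delta> f g = (THE r. (r = 0 \<or> degree r < degree g) \<and>
                                 (\<exists>Q. f = skew_mult \<theta> \<delta> Q g + r))"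

definition skew_rcong :: "('a::field \<Rightarrow> 'a) \<Rightarrow> ('a \<Rightarrow> 'a) \<Rightarrow> 'a poly \<Rightarrow> 'a poly \<Rightarrow> 'a poly \<Rightarrow> bool" where
  "skew_rcong \<theta> \<delta> f h g \<longleftrightarrow> skew_rmod \<theta> \<delta> f g = skew_rmod \<theta> \<delta> h g"

definition skew_D :: "('a::field \<Rightarrow> 'a) \<Rightarrow> ('a \<Rightarrow> 'a) \<Rightarrow> 'a \<Rightarrow> 'a \<Rightarrow> 'a" where
  "skew_D \<theta> \<delta> a b = \<theta> b * a + \<delta> b"

definition op_eval :: "('a::field \<Rightarrow> 'a) \<Rightarrow> ('a \<Rightarrow> 'a) \<Rightarrow> 'a poly \<Rightarrow> 'a \<Rightarrow> 'a \<Rightarrow> 'a" where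
  "op_eval \<theta> \<delta> f b a = (\<Sum>i\<le>degree f. coeff f i * (skew_D \<theta> \<delta> a ^^ i) b)"

definition is_min_annihilator :: "('a::field \<Rightarrow> 'a) \<Rightarrow> ('a \<Rightarrow> 'a) \<Rightarrow> ('a \<times> 'a) set \<Rightarrow> 'a poly \<Rightarrow> bool" where
  "is_min_annihilator \<theta> \<delta> S p \<longleftrightarrow>
     lead_coeff p = 1 \<and> (\<forall>(b, a) \<in> S. op_eval \<theta> \<delta> p b a = 0) \<and>
     (\<forall>g. g \<noteq> 0 \<longrightarrow> (\<forall>(b, a) \<in> S. op_eval \<theta> \<delta> g b a = 0) \<longrightarrow> degree p \<le> degree g)"

definition Fq_indep_family :: "('a::field \<Rightarrow> 'a) \<Rightarrow> nat \<Rightarrow> (nat \<Rightarrow> 'a) \<Rightarrow> bool" where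
  "Fq_indep_family \<theta> k v \<longleftrightarrow>
     (\<forall>c. (\<forall>r<k. c r \<in> fixed_field \<theta>) \<and> (\<Sum>r<k. c r * v r) = 0 \<longrightarrow> (\<forall>r<k. c r = 0))"

definition Fq_indep_set :: "('a::field \<Rightarrow> 'a) \<Rightarrow> 'a set \<Rightarrow> bool" where
  "Fq_indep_set \<theta> A \<longleftrightarrow>
     (\<forall>c. (\<forall>x\<in>A. c x \<in> fixed_field \<theta>) \<and> (\<Sum>x\<in>A. c x * x) = 0 \<longrightarrow> (\<forall>x\<in>A. c x = 0))"

text \<open>rk_q of a collection of entries (given by its finite set of values): the maximal number of
  F_q-linearly independent entries.\<close>
definition rk_q :: "('a::{field,finite} \<Rightarrow> 'a) \<Rightarrow> 'a set \<Rightarrow> nat" where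
  "rk_q \<theta> V = Max (card ` {B. B \<subseteq> V \<and> Fq_indep_set \<theta> B})"

end

theory Submission
  imports Defs
begin

text \<open>Generalized operator evaluation turns skew multiplication into composition,
  \<open>(g \<cdot> h)(b)\<^sub>a = g(h(b)\<^sub>a)\<^sub>a\<close>, and is \<open>F\<^sub>q\<close>-linear in the point \<open>b\<close>, because over a finite
  field a \<open>\<theta>\<close>-derivation vanishes on the fixed field of \<open>\<theta>\<close>. Hence
  \<open>(\<sigma> \<cdot> (R\<^sub>j - f\<^sub>j))(\<beta>\<^sub>j)\<^sub>\<xi> = \<sigma>(e\<^sub>j)\<^sub>\<xi> = 0\<close>, since every error entry is an \<open>F\<^sub>q\<close>-combination of
  error values, which \<open>\<sigma>\<close> annihilates. The minimal skew polynomial \<open>G\<^sub>j\<close> right-divides every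
  skew polynomial vanishing at the code locators (the remainder vanishes there too and has
  smaller degree), so \<open>G\<^sub>j\<close> right-divides \<open>\<sigma> R\<^sub>j - \<sigma> f\<^sub>j\<close>.\<close>

text \<open>The library's \<open>finite_field_power_card_eq_same\<close> is stated for the class \<open>finite_field\<close>,
  which a type variable of sort \<open>{field, finite}\<close> does not carry.\<close>

lemma power_card_UNIV_eq_self:
  fixes x :: "'a::{field,finite}"
  shows "x ^ card (UNIV :: 'a set) = x"
proof (cases "x = 0")
  case False
  let ?U = "UNIV - {0 :: 'a}"
  have "(\<Prod>y\<in>?U. x * y) = \<Prod>?U"
    by (rule prod.reindex_bij_witness[of _ "\<lambda>y. y / x" "\<lambda>y. x * y"]) (use False in auto)
  then have "x ^ (card (UNIV :: 'a set) - 1) = 1"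
    by (simp add: prod.distrib)
  then show ?thesis
    by (metis Suc_diff_1 finite_UNIV finite_UNIV_card_ge_0 mult.right_neutral power_Suc)
qed (simp add: finite_UNIV_card_ge_0)

lemma of_nat_card_UNIV_eq_0: "of_nat (card (UNIV :: 'a::{ring_1,finite} set)) = (0 :: 'a)"
proof -
  have "(\<Sum>x\<in>UNIV. x + 1) = (\<Sum>x\<in>UNIV. x :: 'a)"
    by (rule sum.reindex_bij_witness[of _ "\<lambda>y. y - 1" "\<lambda>y. y + 1"]) auto
  then show ?thesis
    by (simp add: sum.distrib)
qed

locale skew_poly_ring =
  fixes \<theta> \<delta> :: "'a::field \<Rightarrow> 'a"
  assumes aut: "is_field_aut \<theta>" and der: "is_theta_derivation \<theta> \<delta>"
begin

abbreviation D where "D \<equiv> skew_D \<theta> \<delta>"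
abbreviation mulx where "mulx \<equiv> skew_lmul_x \<theta> \<delta>"
abbreviation mul where "mul \<equiv> skew_mult \<theta> \<delta>"
abbreviation ev where "ev \<equiv> op_eval \<theta> \<delta>"

lemma theta_add: "\<theta> (x + y) = \<theta> x + \<theta> y"
  using aut unfolding is_field_aut_def by blast

lemma theta_mult: "\<theta> (x * y) = \<theta> x * \<theta> y"
  using aut unfolding is_field_aut_def by blast

lemma theta_1: "\<theta> 1 = 1"
  using aut unfolding is_field_aut_def by blast

lemma theta_0: "\<theta> 0 = 0"
  using theta_add[of 0 0] by (metis add.right_neutral add_left_cancel)

lemma delta_add: "\<delta> (x + y) = \<delta> x + \<delta> y"
  using der unfolding is_theta_derivation_def by blast

lemma delta_mult: "\<delta> (x * y) = \<delta> x * y + \<theta> x * \<delta> y"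
  using der unfolding is_theta_derivation_def by blast

lemma delta_0: "\<delta> 0 = 0"
  using delta_add[of 0 0] by (metis add.right_neutral add_left_cancel)

lemma delta_power_fixed:
  assumes "\<theta> c = c"
  shows "\<delta> (c ^ Suc n) = of_nat (Suc n) * c ^ n * \<delta> c"
proof (induction n)
  case (Suc n)
  have "\<delta> (c ^ Suc (Suc n)) = \<delta> c * c ^ Suc n + c * (of_nat (Suc n) * c ^ n * \<delta> c)"
    using delta_mult[of c "c ^ Suc n"] Suc assms by simp
  then show ?case
    by (simp add: algebra_simps)
qed simp

lemma D_add: "D a (x + y) = D a x + D a y"
  by (simp add: skew_D_def theta_add delta_add algebra_simps)

lemma D_0: "D a 0 = 0"
  by (simp add: skew_D_def theta_0 delta_0)

lemma D_mult: "D a (c * b) = \<theta> c * D a b + \<delta> c * b"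
  by (simp only: skew_D_def theta_mult delta_mult) (simp add: algebra_simps)

lemma D_sum: "D a (\<Sum>i\<in>A. g i) = (\<Sum>i\<in>A. D a (g i))"
  by (induction A rule: infinite_finite_induct) (simp_all add: D_0 D_add)

lemma funpow_D_add: "(D a ^^ i) (x + y) = (D a ^^ i) x + (D a ^^ i) y"
  by (induction i) (simp_all add: D_add)

lemma funpow_D_0: "(D a ^^ i) 0 = 0"
  by (induction i) (simp_all add: D_0)

lemma op_eval_conv_sum: "degree p \<le> N \<Longrightarrow> ev p b a = (\<Sum>i\<le>N. coeff p i * (D a ^^ i) b)"
  unfolding op_eval_def by (rule sum.mono_neutral_left) (auto simp: coeff_eq_0)

lemma op_eval_0: "ev 0 b a = 0"
  by (simp add: op_eval_def)

lemma op_eval_add: "ev (p + q) b a = ev p b a + ev q b a"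
proof -
  have "degree (p + q) \<le> max (degree p) (degree q)"
    by (rule degree_add_le) auto
  then show ?thesis
    by (simp add: op_eval_conv_sum[of _ "max (degree p) (degree q)"] sum.distrib algebra_simps)
qed

lemma op_eval_diff: "ev (p - q) b a = ev p b a - ev q b a"
  using op_eval_add[of "p - q" q b a] by simp

lemma op_eval_smult: "ev (smult c p) b a = c * ev p b a"
  using op_eval_conv_sum[of "smult c p" "degree p"]
  by (simp add: op_eval_def sum_distrib_left mult.assoc)

lemma op_eval_sum: "ev (\<Sum>i\<in>A. g i) b a = (\<Sum>i\<in>A. ev (g i) b a)"
  by (induction A rule: infinite_finite_induct) (simp_all add: op_eval_0 op_eval_add)

lemma op_eval_at_0: "ev p 0 a = 0"
  by (simp add: op_eval_def funpow_D_0)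

lemma op_eval_point_add: "ev p (x + y) a = ev p x a + ev p y a"
  by (simp add: op_eval_def funpow_D_add sum.distrib algebra_simps)

lemma coeff_skew_lmul_x:
  "coeff (mulx p) i = (case i of 0 \<Rightarrow> 0 | Suc j \<Rightarrow> \<theta> (coeff p j)) + \<delta> (coeff p i)"
  by (simp add: skew_lmul_x_def coeff_pCons coeff_map_poly theta_0 delta_0 split: nat.split)

lemma degree_skew_lmul_x_le: "degree (mulx p) \<le> Suc (degree p)"
  by (rule degree_le) (auto simp: coeff_skew_lmul_x coeff_eq_0 theta_0 delta_0 split: nat.split)

lemma skew_lmul_x_add: "mulx (p + q) = mulx p + mulx q"
  by (rule poly_eqI) (simp add: coeff_skew_lmul_x theta_add delta_add split: nat.split)

lemma funpow_skew_lmul_x_add: "(mulx ^^ i) (p + q) = (mulx ^^ i) p + (mulx ^^ i) q"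
  by (induction i) (simp_all add: skew_lmul_x_add)

lemma op_eval_skew_lmul_x: "ev (mulx q) b a = D a (ev q b a)"
proof -
  let ?d = "degree q"
  have "ev (mulx q) b a
      = (\<Sum>i\<le>Suc ?d. (case i of 0 \<Rightarrow> 0 | Suc j \<Rightarrow> \<theta> (coeff q j)) * (D a ^^ i) b)
        + (\<Sum>i\<le>Suc ?d. \<delta> (coeff q i) * (D a ^^ i) b)"
    by (simp add: op_eval_conv_sum[OF degree_skew_lmul_x_le] coeff_skew_lmul_x
        sum.distrib algebra_simps)
  also have "(\<Sum>i\<le>Suc ?d. (case i of 0 \<Rightarrow> 0 | Suc j \<Rightarrow> \<theta> (coeff q j)) * (D a ^^ i) b)
      = (\<Sum>i\<le>?d. \<theta> (coeff q i) * (D a ^^ Suc i) b)"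
    by (subst sum.atMost_Suc_shift) simp
  also have "(\<Sum>i\<le>Suc ?d. \<delta> (coeff q i) * (D a ^^ i) b)
      = (\<Sum>i\<le>?d. \<delta> (coeff q i) * (D a ^^ i) b)"
    by (simp add: coeff_eq_0 delta_0)
  also have "(\<Sum>i\<le>?d. \<theta> (coeff q i) * (D a ^^ Suc i) b)
      + (\<Sum>i\<le>?d. \<delta> (coeff q i) * (D a ^^ i) b) = D a (ev q b a)"
    by (simp add: op_eval_def D_sum D_mult sum.distrib)
  finally show ?thesis .
qed

lemma op_eval_funpow_skew_lmul_x: "ev ((mulx ^^ i) q) b a = (D a ^^ i) (ev q b a)"
  by (induction i) (simp_all add: op_eval_skew_lmul_x)

lemma op_eval_skew_mult: "ev (mul p q) b a = ev p (ev q b a) a"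
  unfolding skew_mult_def op_eval_sum op_eval_smult op_eval_funpow_skew_lmul_x
  by (simp only: op_eval_def[of _ _ p])

lemma skew_mult_conv_sum:
  "degree p \<le> N \<Longrightarrow> mul p q = (\<Sum>i\<le>N. smult (coeff p i) ((mulx ^^ i) q))"
  unfolding skew_mult_def by (rule sum.mono_neutral_left) (auto simp: coeff_eq_0)

lemma skew_mult_0_left: "mul 0 q = 0"
  by (simp add: skew_mult_def)

lemma skew_mult_add_left: "mul (p + p') q = mul p q + mul p' q"
proof -
  have "degree (p + p') \<le> max (degree p) (degree p')"
    by (rule degree_add_le) auto
  then show ?thesis
    by (simp add: skew_mult_conv_sum[of _ "max (degree p) (degree p')"] sum.distrib smult_add_left)
qed

lemma skew_mult_diff_left: "mul (p - p') q = mul p q - mul p' q"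
  using skew_mult_add_left[of "p - p'" p' q] by simp

lemma skew_mult_add_right: "mul p (q + q') = mul p q + mul p q'"
  by (simp add: skew_mult_def funpow_skew_lmul_x_add smult_add_right sum.distrib)

lemma skew_mult_diff_right: "mul p (q - q') = mul p q - mul p q'"
  using skew_mult_add_right[of p "q - q'" q'] by simp

lemma skew_mult_monom_left: "mul (monom c k) q = smult c ((mulx ^^ k) q)"
proof -
  have "mul (monom c k) q = (\<Sum>i\<le>k. if i = k then smult c ((mulx ^^ k) q) else 0)"
    unfolding skew_mult_conv_sum[OF degree_monom_le] by (rule sum.cong) (auto simp: coeff_monom)
  then show ?thesis
    by simp
qed


lemma skew_lmul_x_monic:
  assumes "lead_coeff p = 1"
  shows "degree (mulx p) = Suc (degree p)" "lead_coeff (mulx p) = 1"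
proof -
  have top: "coeff (mulx p) (Suc (degree p)) = 1"
    by (simp add: coeff_skew_lmul_x assms theta_1 coeff_eq_0 delta_0)
  then show "degree (mulx p) = Suc (degree p)"
    using degree_skew_lmul_x_le le_degree[of "mulx p"] by (metis le_antisym one_neq_zero)
  with top show "lead_coeff (mulx p) = 1"
    by simp
qed

lemma funpow_skew_lmul_x_monic:
  assumes "lead_coeff p = 1"
  shows "degree ((mulx ^^ i) p) = degree p + i \<and> lead_coeff ((mulx ^^ i) p) = 1"
proof (induction i)
  case (Suc i)
  then have "lead_coeff ((mulx ^^ i) p) = 1" "degree ((mulx ^^ i) p) = degree p + i"
    by blast+
  with skew_lmul_x_monic[OF this(1)] show ?case
    by simp
qed (simp add: assms)

lemma coeff_skew_mult_monic_top:
  assumes G: "lead_coeff G = 1" and "Q \<noteq> 0"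
  shows "coeff (mul Q G) (degree G + degree Q) = lead_coeff Q"
proof -
  have "coeff (mul Q G) (degree G + degree Q)
      = (\<Sum>i\<le>degree Q. coeff Q i * coeff ((mulx ^^ i) G) (degree G + degree Q))"
    by (simp add: skew_mult_def coeff_sum)
  also have "\<dots> = (\<Sum>i\<le>degree Q. if i = degree Q then lead_coeff Q else 0)"
  proof (rule sum.cong)
    fix i assume "i \<in> {..degree Q}"
    then have "i = degree Q \<or> degree ((mulx ^^ i) G) < degree G + degree Q"
      using funpow_skew_lmul_x_monic[OF G, of i] by auto
    then show "coeff Q i * coeff ((mulx ^^ i) G) (degree G + degree Q)
        = (if i = degree Q then lead_coeff Q else 0)"
      using funpow_skew_lmul_x_monic[OF G, of i] by (auto simp: coeff_eq_0)
  qed simp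
  finally show ?thesis
    by simp
qed

lemma skew_right_division_step:
  assumes G: "lead_coeff G = 1" and "h \<noteq> 0" and "degree G \<le> degree h"
  defines "h' \<equiv> h - mul (monom (lead_coeff h) (degree h - degree G)) G"
  shows "h' = 0 \<or> degree h' < degree h"
proof -
  let ?XG = "(mulx ^^ (degree h - degree G)) G"
  have XG: "degree ?XG = degree h" "lead_coeff ?XG = 1"
    using funpow_skew_lmul_x_monic[OF G, of "degree h - degree G"] assms(3) by auto
  have "h' = h - smult (lead_coeff h) ?XG"
    by (simp add: h'_def skew_mult_monom_left)
  then have "degree h' \<le> degree h" and "coeff h' (degree h) = 0"
    using XG by (auto intro: degree_diff_le degree_smult_le[THEN order.trans])
  then show ?thesis
    using leading_coeff_0_iff le_neq_implies_less by metis
qed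

lemma skew_right_division_exists:
  assumes G: "lead_coeff G = 1"
  shows "\<exists>Q r. h = mul Q G + r \<and> (r = 0 \<or> degree r < degree G)"
proof (induction "degree h" arbitrary: h rule: less_induct)
  case less
  show ?case
  proof (cases "h = 0 \<or> degree h < degree G")
    case True
    then show ?thesis
      by (intro exI[of _ 0] exI[of _ h]) (auto simp: skew_mult_0_left)
  next
    case False
    define P where "P = monom (lead_coeff h) (degree h - degree G)"
    have "h - mul P G = 0 \<or> degree (h - mul P G) < degree h"
      unfolding P_def using False by (intro skew_right_division_step[OF G]) auto
    then obtain Q r where "h - mul P G = mul Q G + r" "r = 0 \<or> degree r < degree G"
      using less skew_mult_0_left by (metis add_0)
    then show ?thesis
      by (intro exI[of _ "P + Q"] exI[of _ r]) (simp add: skew_mult_add_left algebra_simps)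
  qed
qed

lemma skew_right_remainder_unique:
  assumes G: "lead_coeff G = 1" and eq: "mul Q G + r = mul Q' G + r'"
    and r: "r = 0 \<or> degree r < degree G" and r': "r' = 0 \<or> degree r' < degree G"
  shows "r = r'"
proof (rule ccontr)
  assume "r \<noteq> r'"
  then have "Q - Q' \<noteq> 0"
    using eq by auto
  moreover have "mul (Q - Q') G = r' - r"
    using eq by (simp add: skew_mult_diff_left algebra_simps)
  moreover have "coeff (r' - r) (degree G + degree (Q - Q')) = 0"
    using r r' by (auto simp: coeff_eq_0)
  ultimately show False
    using coeff_skew_mult_monic_top[OF G] by (metis leading_coeff_0_iff)
qed

lemma skew_rmod_eqI:
  assumes G: "lead_coeff G = 1" and "f = mul Q G + r" and "r = 0 \<or> degree r < degree G"
  shows "skew_rmod \<theta> \<delta> f G = r"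
  unfolding skew_rmod_def
proof (rule the_equality)
  show "(r = 0 \<or> degree r < degree G) \<and> (\<exists>Q. f = mul Q G + r)"
    using assms by blast
next
  fix r' assume "(r' = 0 \<or> degree r' < degree G) \<and> (\<exists>Q. f = mul Q G + r')"
  then show "r' = r"
    using skew_right_remainder_unique[OF G] assms by metis
qed

lemma skew_rcongI:
  assumes G: "lead_coeff G = 1" and "f - h = mul Q G"
  shows "skew_rcong \<theta> \<delta> f h G"
proof -
  obtain Q' r where h: "h = mul Q' G + r" and r: "r = 0 \<or> degree r < degree G"
    using skew_right_division_exists[OF G] by blast
  have "f = mul (Q + Q') G + r"
    using assms(2) h by (simp add: skew_mult_add_left algebra_simps)
  then show ?thesis
    unfolding skew_rcong_def using skew_rmod_eqI[OF G _ r] h by metis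
qed

lemma min_annihilator_right_dvd:
  assumes G: "is_min_annihilator \<theta> \<delta> S G" and h: "\<forall>(b, a) \<in> S. ev h b a = 0"
  shows "\<exists>Q. h = mul Q G"
proof -
  have monic: "lead_coeff G = 1" and G_vanish: "\<forall>(b, a) \<in> S. ev G b a = 0"
    using G unfolding is_min_annihilator_def by blast+
  obtain Q r where hQr: "h = mul Q G + r" and r: "r = 0 \<or> degree r < degree G"
    using skew_right_division_exists[OF monic] by blast
  have "\<forall>(b, a) \<in> S. ev r b a = 0"
  proof (intro ballI, clarify)
    fix b a assume "(b, a) \<in> S"
    then have "ev h b a = 0" "ev (mul Q G) b a = 0"
      using h G_vanish by (auto simp: op_eval_skew_mult op_eval_at_0)
    then show "ev r b a = 0"
      using hQr op_eval_add by (metis add_0)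
  qed
  then have "r = 0"
    using G r unfolding is_min_annihilator_def by (meson not_le)
  then show ?thesis
    using hQr by auto
qed

end

locale finite_skew_poly_ring = skew_poly_ring \<theta> \<delta> for \<theta> \<delta> :: "'a::{field,finite} \<Rightarrow> 'a"
begin

text \<open>With \<open>N = |F|\<close> one has \<open>c = c\<^sup>N\<close> and \<open>N = 0\<close> in \<open>F\<close>, so the Leibniz rule gives
  \<open>\<delta> c = \<delta> (c\<^sup>N) = N c\<^sup>N\<^sup>-\<^sup>1 \<delta> c = 0\<close> for every constant \<open>c\<close> of \<open>\<theta>\<close>.\<close>

lemma delta_fixed_field_eq_0:
  assumes "c \<in> fixed_field \<theta>"
  shows "\<delta> c = 0"
proof -
  obtain n where n: "card (UNIV :: 'a set) = Suc n"
    by (metis finite_UNIV finite_UNIV_card_ge_0 gr0_implies_Suc)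
  have "\<delta> c = \<delta> (c ^ Suc n)"
    using power_card_UNIV_eq_self[of c] n by metis
  also have "\<dots> = of_nat (Suc n) * c ^ n * \<delta> c"
    using assms by (intro delta_power_fixed) (simp add: fixed_field_def)
  also have "\<dots> = 0"
    using of_nat_card_UNIV_eq_0[where 'a='a] n by simp
  finally show ?thesis .
qed

lemma funpow_D_fixed_mult:
  "c \<in> fixed_field \<theta> \<Longrightarrow> (D a ^^ i) (c * x) = c * (D a ^^ i) x"
  by (induction i) (simp_all add: D_mult delta_fixed_field_eq_0 fixed_field_def)

lemma op_eval_point_fixed_mult: "c \<in> fixed_field \<theta> \<Longrightarrow> ev p (c * x) a = c * ev p x a"
  by (simp add: op_eval_def funpow_D_fixed_mult sum_distrib_left algebra_simps)

lemma op_eval_point_fixed_sum: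
  "\<forall>u\<in>A. c u \<in> fixed_field \<theta> \<Longrightarrow> ev p (\<Sum>u\<in>A. c u * x u) a = (\<Sum>u\<in>A. c u * ev p (x u) a)"
  by (induction A rule: infinite_finite_induct)
     (simp_all add: op_eval_at_0 op_eval_point_add op_eval_point_fixed_mult)

end

theorem theorem1:
  fixes \<theta> \<delta> :: "'a::{field,finite} \<Rightarrow> 'a"
    and s l n k t :: nat
    and nn :: "nat \<Rightarrow> nat"
    and \<xi> :: "nat \<Rightarrow> 'a"
    and \<beta> e :: "nat \<Rightarrow> nat \<Rightarrow> nat \<Rightarrow> 'a"
    and f R G :: "nat \<Rightarrow> 'a poly"
    and \<sigma> :: "'a poly"
    and tt :: "nat \<Rightarrow> nat"
    and a :: "nat \<Rightarrow> nat \<Rightarrow> 'a"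
    and B :: "nat \<Rightarrow> nat \<Rightarrow> nat \<Rightarrow> nat \<Rightarrow> 'a"
  assumes aut: "is_field_aut \<theta>"
    and der: "is_theta_derivation \<theta> \<delta>"
    and s_pos: "s \<ge> 1"
    and xi_nontriv: "\<forall>i<l. \<not> skew_conj \<theta> \<delta> 0 (\<xi> i)"
    and xi_distinct: "\<forall>i<l. \<forall>i'<l. i \<noteq> i' \<longrightarrow> \<not> skew_conj \<theta> \<delta> (\<xi> i) (\<xi> i')"
    and partition: "\<forall>i<l. nn i > 0" "n = (\<Sum>i<l. nn i)"
    and beta_indep: "\<forall>j<s. \<forall>i<l. Fq_indep_family \<theta> (nn i) (\<beta> j i)"
    and f_deg: "\<forall>j<s. f j = 0 \<or> degree (f j) < k"
    \<comment> \<open>error weight and error decomposition\<close>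
    and tt_def: "\<forall>i<l. tt i = rk_q \<theta> {e j i r | j r. j < s \<and> r < nn i}"
    and wt: "t = (\<Sum>i<l. tt i)"
    and a_indep: "\<forall>i<l. Fq_indep_family \<theta> (tt i) (a i)"
    and B_Fq: "\<forall>j<s. \<forall>i<l. \<forall>u<tt i. \<forall>r<nn i. B j i u r \<in> fixed_field \<theta>"
    and B_rank: "\<forall>i<l. \<forall>c. (\<forall>u<tt i. c u \<in> fixed_field \<theta>) \<and>
                   (\<forall>j<s. \<forall>r<nn i. (\<Sum>u<tt i. c u * B j i u r) = 0) \<longrightarrow> (\<forall>u<tt i. c u = 0)"
    and e_decomp: "\<forall>j<s. \<forall>i<l. \<forall>r<nn i. e j i r = (\<Sum>u<tt i. a i u * B j i u r)"
    \<comment> \<open>error-span polynomial\<close>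
    and sigma: "is_min_annihilator \<theta> \<delta> {(a i u, \<xi> i) | i u. i < l \<and> u < tt i} \<sigma>"
    \<comment> \<open>minimal skew polynomials of the code locators\<close>
    and G: "\<forall>j<s. is_min_annihilator \<theta> \<delta> {(\<beta> j i r, \<xi> i) | i r. i < l \<and> r < nn i} (G j)"
    \<comment> \<open>interpolation polynomials of the received word y = c + e, c_j = f_j(beta_j)_xi\<close>
    and R_deg: "\<forall>j<s. R j = 0 \<or> degree (R j) < n"
    and R_interp: "\<forall>j<s. \<forall>i<l. \<forall>r<nn i.
                     op_eval \<theta> \<delta> (R j) (\<beta> j i r) (\<xi> i)
                       = op_eval \<theta> \<delta> (f j) (\<beta> j i r) (\<xi> i) + e j i r"
  shows "\<forall>j<s. skew_rcong \<theta> \<delta> (skew_mult \<theta> \<delta> \<sigma> (R j)) (skew_mult \<theta> \<delta> \<sigma> (f j)) (G j)"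
proof (intro allI impI)
  interpret finite_skew_poly_ring \<theta> \<delta>
    using aut der by unfold_locales
  fix j assume j: "j < s"
  have "\<forall>(b, x) \<in> {(\<beta> j i r, \<xi> i) | i r. i < l \<and> r < nn i}. ev (mul \<sigma> (R j - f j)) b x = 0"
  proof (intro ballI, clarify)
    fix i r assume i: "i < l" and r: "r < nn i"
    have "ev (R j - f j) (\<beta> j i r) (\<xi> i) = (\<Sum>u<tt i. B j i u r * a i u)"
      using R_interp e_decomp j i r by (simp add: op_eval_diff mult.commute)
    moreover have "ev \<sigma> (a i u) (\<xi> i) = 0" if "u < tt i" for u
      using sigma i that unfolding is_min_annihilator_def by blast
    ultimately show "ev (mul \<sigma> (R j - f j)) (\<beta> j i r) (\<xi> i) = 0"
      using B_Fq j i r by (simp add: op_eval_skew_mult op_eval_point_fixed_sum)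
  qed
  moreover have G_j: "is_min_annihilator \<theta> \<delta> {(\<beta> j i r, \<xi> i) | i r. i < l \<and> r < nn i} (G j)"
    using G j by blast
  ultimately obtain Q where "mul \<sigma> (R j - f j) = mul Q (G j)"
    using min_annihilator_right_dvd by blast
  then have "mul \<sigma> (R j) - mul \<sigma> (f j) = mul Q (G j)"
    by (simp add: skew_mult_diff_right)
  moreover have "lead_coeff (G j) = 1"
    using G_j by (simp add: is_min_annihilator_def)
  ultimately show "skew_rcong \<theta> \<delta> (mul \<sigma> (R j)) (mul \<sigma> (f j)) (G j)"
    by (rule skew_rcongI[rotated])
qed

end
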